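(* Let $P$ be a finite geometric lattice of rank $n$ with a fixed atom ordering, $S=\{s_1<\dots<s_k\}\subseteq\{1,\dots,n-1\}$, and let $F$ be a standard filling of $\mathrm{Rib}(s_1,s_2-s_1,\dots,n-s_k)$ whose reading word is an $\mathrm{NBC}^+$ basis of $P$. Then the summands $\mathrm{sgn}(\sigma)\,\bar f_{chain}(\{\sigma F\})$, $\sigma\in\mathrm{Col}_F$, appearing in $\bar f_{chain}(v_F)$ are distinct maximal chains of $P^S$; that is, $\bar f_{chain}(\{\sigma F\})\ne\bar f_{chain}(\{\sigma' F\})$ for distinct $\sigma,\sigma'\in\mathrm{Col}_F$.
   Context: $A(x)$ is the set of atoms below $x$. NBC independent set: atoms $\{b_1,\dots,b_l\}$ whose join has rank $l$ and such that every atom outside the set below the join is later in the order than some $b_j$. $\mathrm{NBC}^+$ basis: ordered NBC independent set $(b_1,\dots,b_n)$, $n=\mathrm{rk}(P)$, with $b_j=\min(A(b_1\vee\dots\vee b_j)\setminus A(b_1\vee\dots\vee b_{j-1}))$. $\mathrm{Rib}(r_1,\dots,r_p)$: ribbon with rows of lengths $r_1,\dots,r_p$ bottom to top, each row starting directly above the last box of the row below; reading word: left to right, bottom row to top; standard: entries increase in atom order along rows left to right and down columns top to bottom. $\mathrm{Col}_F$: permutations of the entries preserving each column. Tabloid $\{F\}$: $F$ modulo permuting entries within rows; $v_F=\sum_{\sigma\in\mathrm{Col}_F}\mathrm{sgn}(\sigma)\{\sigma F\}$. $P^S$: elements with rank in $S$. For reading word $(F_1,\dots,F_n)$, $\bar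 f_{chain}(\{F\})$ is the chain $F_1\vee\dots\vee F_{s_1}<\dots<F_1\vee\dots\vee F_{s_k}$ in $P^S$, extended linearly. *)

theory Defs
  imports Main "HOL-Combinatorics.Permutations"
begin

(* P is modelled as a finite type with a (necessarily complete) lattice structure. *)

definition covers :: "'a::order \<Rightarrow> 'a \<Rightarrow> bool" where
  "covers x y \<longleftrightarrow> x < y \<and> \<not> (\<exists>z. x < z \<and> z < y)"

definition is_atom :: "'a::complete_lattice \<Rightarrow> bool" where
  "is_atom a \<longleftrightarrow> covers bot a"

definition atoms_below :: "'a::complete_lattice \<Rightarrow> 'a set" where
  "atoms_below x = {a. is_atom a \<and> a \<le> x}"

definition rk :: "'a::{finite,complete_lattice} \<Rightarrow> nat" where
  "rk x = Max (length ` {xs. sorted_wrt (<) xs \<and> (\<forall>y\<in>set xs. y < x)})"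

definition geometric_lattice :: "'a::{finite,complete_lattice} itself \<Rightarrow> bool" where
  "geometric_lattice _ \<longleftrightarrow>
     (\<forall>x::'a. x = Sup (atoms_below x)) \<and>
     (\<forall>x y::'a. covers (inf x y) x \<and> covers (inf x y) y \<longrightarrow>
                 covers x (sup x y) \<and> covers y (sup x y))"

(* atom ordering given by an injective labelling ord of the atoms: a before b iff ord a < ord b *)
definition atom_ordering :: "('a::complete_lattice \<Rightarrow> nat) \<Rightarrow> bool" where
  "atom_ordering ord \<longleftrightarrow> inj_on ord {a. is_atom a}"

definition is_min_in :: "('a \<Rightarrow> nat) \<Rightarrow> 'a \<Rightarrow> 'a set \<Rightarrow> bool" where
  "is_min_in ord b X \<longleftrightarrow> b \<in> X \<and> (\<forall>a\<in>X. ord b \<le> ord a)"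

definition NBC_independent :: "('a::{finite,complete_lattice} \<Rightarrow> nat) \<Rightarrow> 'a set \<Rightarrow> bool" where
  "NBC_independent ord B \<longleftrightarrow>
     B \<subseteq> {a. is_atom a} \<and> rk (Sup B) = card B \<and>
     (\<forall>a\<in>atoms_below (Sup B) - B. \<exists>b\<in>B. ord b < ord a)"

definition NBC_plus_basis :: "('a::{finite,complete_lattice} \<Rightarrow> nat) \<Rightarrow> 'a list \<Rightarrow> bool" where
  "NBC_plus_basis ord bs \<longleftrightarrow>
     distinct bs \<and> length bs = rk (top::'a) \<and> NBC_independent ord (set bs) \<and>
     (\<forall>j<length bs. is_min_in ord (bs ! j)
        (atoms_below (Sup (set (take (Suc j) bs))) - atoms_below (Sup (set (take j bs)))))"

(* Ribbon Rib(s_1, s_2-s_1, ..., n-s_k) with S = set ss, described through the reading word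
   w (0-based: w!i is the entry in reading position i+1).  Reading positions p and p+1
   (1-based) are in the same column (p+1 directly above p) iff p \<in> S; otherwise they are
   consecutive in a row. *)
definition standard_ribbon_filling ::
    "('a \<Rightarrow> nat) \<Rightarrow> nat list \<Rightarrow> nat \<Rightarrow> 'a list \<Rightarrow> bool" where
  "standard_ribbon_filling ord ss n w \<longleftrightarrow>
     length w = n \<and>
     (\<forall>i. Suc i < n \<longrightarrow>
        (if Suc i \<in> set ss then ord (w ! Suc i) < ord (w ! i)
         else ord (w ! i) < ord (w ! Suc i)))"

definition same_column :: "nat list \<Rightarrow> nat \<Rightarrow> nat \<Rightarrow> bool" where
  "same_column ss i j \<longleftrightarrow> (\<forall>t. min i j < t \<and> t \<le> max i j \<longrightarrow> t \<in> set ss)"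

(* Col_F, as permutations of the positions preserving every column *)
definition col_perms :: "nat list \<Rightarrow> nat \<Rightarrow> (nat \<Rightarrow> nat) set" where
  "col_perms ss n = {\<pi>. \<pi> permutes {..<n} \<and> (\<forall>i<n. same_column ss i (\<pi> i))}"

definition perm_word :: "(nat \<Rightarrow> nat) \<Rightarrow> 'a list \<Rightarrow> 'a list" where
  "perm_word \<pi> w = map (\<lambda>i. w ! \<pi> i) [0..<length w]"

definition f_chain :: "nat list \<Rightarrow> 'a::complete_lattice list \<Rightarrow> 'a list" where
  "f_chain ss w = map (\<lambda>s. Sup (set (take s w))) ss"

definition maximal_chain_PS :: "nat list \<Rightarrow> 'a::{finite,complete_lattice} list \<Rightarrow> bool" where
  "maximal_chain_PS ss c \<longleftrightarrow>
     length c = length ss \<and> (\<forall>i<length c. rk (c ! i) = ss ! i) \<and> sorted_wrt (<) c"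

end

theory Submission
  imports Defs
begin

(* The reading word of \<sigma>F is a rearrangement of the NBC basis w, so each of its prefixes is a
   set of independent atoms, and in a semimodular lattice the join of k independent atoms has
   rank k: the joins of the prefixes of lengths s \<in> S therefore form a maximal chain of P^S.
   Independence also makes the join injective on sets of atoms of w, so the chain determines
   the prefix sets of lengths s \<in> S; a prefix of length s \<notin> S is a union of whole columns
   of the ribbon, so every element of Col_F maps it onto itself.  Since w is distinct, knowing
   all its prefix sets determines \<sigma>.  Nothing that involves the atom ordering (standardness
   of F, the NBC and minimality conditions on w) is needed: only the independence of the
   atoms of w. *)

section \<open>Semimodular lattices and the Jordan-Dedekind chain condition\<close>

definition semimodular :: "'a::lattice itself \<Rightarrow> bool" where
  "semimodular _ \<longleftrightarrow>
     (\<forall>x y::'a. covers (inf x y) x \<and> covers (inf x y) y \<longrightarrow> covers x (sup x y))"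

lemma geometric_lattice_semimodular:
  "geometric_lattice TYPE('a::{finite,complete_lattice}) \<Longrightarrow> semimodular TYPE('a)"
  unfolding geometric_lattice_def semimodular_def by blast

lemma semimodular_covers_sup:
  fixes x y :: "'a::lattice"
  assumes "semimodular TYPE('a)" "covers (inf x y) x" "covers (inf x y) y"
  shows "covers x (sup x y)" "covers y (sup x y)"
  using assms unfolding semimodular_def by (blast, metis inf_commute sup_commute)

lemma covers_imp_less: "covers x y \<Longrightarrow> x < y"
  by (simp add: covers_def)

lemma inf_covers_eq:
  fixes x y z :: "'a::lattice"
  assumes "covers x y" "covers x z" "y \<noteq> z"
  shows "inf y z = x"
proof -
  have "inf y z \<noteq> y"
  proof
    assume "inf y z = y"
    then have "y < z" using \<open>y \<noteq> z\<close> by (metis inf.cobounded2 le_less)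
    moreover have "x < y" using \<open>covers x y\<close> by (rule covers_imp_less)
    ultimately show False using \<open>covers x z\<close> by (auto simp: covers_def)
  qed
  then have "inf y z < y" using inf.cobounded1 by (rule neq_le_trans)
  moreover have "x \<le> inf y z" using assms by (simp add: covers_def less_imp_le)
  ultimately show ?thesis using \<open>covers x y\<close> unfolding covers_def by (metis le_less)
qed

lemma wfp_less_finite: "wfp ((<) :: 'a::{finite,order} \<Rightarrow> 'a \<Rightarrow> bool)"
  by (rule strict_partial_order_wfp_on_finite_set) (auto intro: transp_onI)

lemma wfp_greater_finite: "wfp ((>) :: 'a::{finite,order} \<Rightarrow> 'a \<Rightarrow> bool)"
  by (rule strict_partial_order_wfp_on_finite_set) (auto intro: transp_onI)

lemma covers_above_exists:
  fixes x z :: "'a::{finite,order}"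
  assumes "x < z"
  shows "\<exists>y. covers x y \<and> y \<le> z"
proof -
  obtain y where y: "x < y" "y \<le> z" and min: "\<forall>u. x < u \<and> u \<le> z \<longrightarrow> u \<le> y \<longrightarrow> y = u"
    using finite_has_minimal[of "{u. x < u \<and> u \<le> z}"] assms by auto
  have "covers x y"
    unfolding covers_def using y min by (metis less_le order.trans)
  with y show ?thesis by blast
qed

lemma covers_below_exists:
  fixes x z :: "'a::{finite,order}"
  assumes "x < z"
  shows "\<exists>y. covers y z \<and> x \<le> y"
proof -
  obtain y where y: "x \<le> y" "y < z" and max: "\<forall>u. x \<le> u \<and> u < z \<longrightarrow> y \<le> u \<longrightarrow> y = u"
    using finite_has_maximal[of "{u. x \<le> u \<and> u < z}"] assms by auto
  have "covers y z"
    unfolding covers_def using y max by (metis less_le order.trans)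
  with y show ?thesis by blast
qed

(* saturated_chain x ys z: x \<lessdot> ys!0 \<lessdot> ... \<lessdot> z.  The bottom x is not listed, so length ys is the
   length of the chain. *)
inductive saturated_chain :: "'a::order \<Rightarrow> 'a list \<Rightarrow> 'a \<Rightarrow> bool" where
  base: "saturated_chain x [] x"
| step: "covers x y \<Longrightarrow> saturated_chain y ys z \<Longrightarrow> saturated_chain x (y # ys) z"

inductive_cases saturated_chain_ConsE: "saturated_chain x (y # ys) z"

lemma saturated_chain_sorted:
  "saturated_chain x ys z \<Longrightarrow> sorted_wrt (<) (x # ys) \<and> last (x # ys) = z"
  by (induction rule: saturated_chain.induct) (auto simp: covers_def intro: less_trans)

lemma saturated_chain_le: "saturated_chain x ys z \<Longrightarrow> x \<le> z"
  by (induction rule: saturated_chain.induct) (auto simp: covers_def)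

lemma saturated_chain_Nil_iff: "saturated_chain x ys z \<Longrightarrow> ys = [] \<longleftrightarrow> x = z"
  by (induction rule: saturated_chain.induct)
    (auto dest!: saturated_chain_le covers_imp_less)

lemma saturated_chain_append:
  "saturated_chain x ys y \<Longrightarrow> saturated_chain y zs z \<Longrightarrow> saturated_chain x (ys @ zs) z"
  by (induction rule: saturated_chain.induct) (auto intro: saturated_chain.intros)

lemma saturated_chain_exists:
  fixes x z :: "'a::{finite,order}"
  shows "x \<le> z \<Longrightarrow> \<exists>ys. saturated_chain x ys z"
proof (induction x rule: wfp_induct_rule[OF wfp_greater_finite])
  case (1 x)
  show ?case
  proof (cases "x = z")
    case True
    then show ?thesis by (blast intro: saturated_chain.base)
  next
    case False
    then obtain y where "covers x y" "y \<le> z"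
      using 1 covers_above_exists by (metis le_less)
    with 1 show ?thesis by (meson covers_imp_less saturated_chain.step)
  qed
qed

theorem saturated_chain_length_eq:
  fixes x z :: "'a::{finite,lattice}"
  assumes semi: "semimodular TYPE('a)"
  shows "saturated_chain x ys z \<Longrightarrow> saturated_chain x zs z \<Longrightarrow> length ys = length zs"
proof (induction ys arbitrary: x zs rule: measure_induct_rule[where f = length])
  case (less ys)
  show ?case
  proof (cases "ys = [] \<or> zs = []")
    case True
    then show ?thesis using less.prems saturated_chain_Nil_iff by blast
  next
    case False
    then obtain y1 ys' y2 zs' where ys: "ys = y1 # ys'" and zs: "zs = y2 # zs'"
      by (meson list.exhaust)
    from less.prems obtain c1: "covers x y1" "saturated_chain y1 ys' z"
      and c2: "covers x y2" "saturated_chain y2 zs' z"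
      unfolding ys zs by (blast elim: saturated_chain_ConsE)
    show ?thesis
    proof (cases "y1 = y2")
      case True
      then have "length ys' = length zs'"
        using less.IH[of ys' y1 zs'] c1(2) c2(2) ys by simp
      then show ?thesis using ys zs by simp
    next
      case False
      (* both y1 and y2 are covered by their join, and any saturated chain from the join up to z
         closes the diamond *)
      have "inf y1 y2 = x" using inf_covers_eq c1(1) c2(1) False .
      then have up: "covers y1 (sup y1 y2)" "covers y2 (sup y1 y2)"
        using semimodular_covers_sup[OF semi] c1(1) c2(1) by auto
      have "sup y1 y2 \<le> z" using saturated_chain_le[OF c1(2)] saturated_chain_le[OF c2(2)] by simp
      then obtain es where es: "saturated_chain (sup y1 y2) es z"
        using saturated_chain_exists by blast
      have "length ys' = length (sup y1 y2 # es)"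
        using less.IH[of ys' y1 "sup y1 y2 # es"] c1(2) saturated_chain.step[OF up(1) es] ys
        by simp
      moreover have "length (sup y1 y2 # es) = length zs'"
        using less.IH[of "sup y1 y2 # es" y2 zs'] saturated_chain.step[OF up(2) es] c2(2) ys
          calculation by simp
      ultimately show ?thesis using ys zs by simp
    qed
  qed
qed

section \<open>The rank function\<close>

lemma finite_strict_chains:
  "finite {xs::'a::{finite,order} list. sorted_wrt (<) xs \<and> (\<forall>y\<in>set xs. y < x)}"
proof (rule finite_subset)
  have "distinct xs" if "sorted_wrt (<) xs" for xs :: "'a list"
    using that by (induction xs) auto
  then show "{xs::'a list. sorted_wrt (<) xs \<and> (\<forall>y\<in>set xs. y < x)}
      \<subseteq> {xs. length xs \<le> card (UNIV::'a set)}"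
    by (auto simp flip: distinct_card intro: card_mono[OF finite_UNIV subset_UNIV])
qed (use finite_lists_length_le[of "UNIV::'a set"] in simp)

lemma strict_chain_length_le_saturated_chain:
  fixes x :: "'a::{finite,lattice}"
  assumes semi: "semimodular TYPE('a)"
  shows "sorted_wrt (<) cs \<Longrightarrow> \<forall>c\<in>set cs. c < x \<Longrightarrow> saturated_chain b ys x
    \<Longrightarrow> \<forall>c\<in>set cs. b \<le> c \<Longrightarrow> length cs \<le> length ys"
proof (induction cs arbitrary: x ys rule: rev_induct)
  case (snoc c cs)
  obtain ds where ds: "saturated_chain b ds c"
    using saturated_chain_exists[of b c] snoc.prems(4) by auto
  have "length cs \<le> length ds"
    using snoc.IH[OF _ _ ds] snoc.prems by (auto simp: sorted_wrt_append)
  have "c \<le> x" using snoc.prems(2) by (simp add: less_imp_le)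
  then obtain es where es: "saturated_chain c es x"
    using saturated_chain_exists by blast
  have "es \<noteq> []" using saturated_chain_Nil_iff[OF es] snoc.prems(2) by auto
  have "length ys = length (ds @ es)"
    using saturated_chain_length_eq[OF semi snoc.prems(3) saturated_chain_append[OF ds es]] .
  then show ?case using \<open>length cs \<le> length ds\<close> \<open>es \<noteq> []\<close> by (cases es) auto
qed simp

lemma rk_eq_length_saturated_chain:
  fixes x :: "'a::{finite,complete_lattice}"
  assumes semi: "semimodular TYPE('a)" and ys: "saturated_chain bot ys x"
  shows "rk x = length ys"
proof (rule antisym)
  let ?C = "{cs::'a list. sorted_wrt (<) cs \<and> (\<forall>c\<in>set cs. c < x)}"
  have "[] \<in> ?C" by simp
  show "rk x \<le> length ys"
    unfolding rk_def
  proof (subst Max_le_iff)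
    show "finite (length ` ?C)" using finite_strict_chains by blast
    show "length ` ?C \<noteq> {}" using \<open>[] \<in> ?C\<close> by blast
  qed (use strict_chain_length_le_saturated_chain[OF semi _ _ ys] in auto)
  show "length ys \<le> rk x"
  proof (cases "ys = []")
    case False
    have sorted: "sorted_wrt (<) (bot # ys)" and "last ys = x"
      using saturated_chain_sorted[OF ys] False by auto
    then obtain ys' where ys': "ys = ys' @ [x]"
      using False by (metis append_butlast_last_id)
    then have "bot # ys' \<in> ?C"
      using sorted by (simp add: sorted_wrt_append)
    then have "length (bot # ys') \<le> rk x"
      unfolding rk_def by (rule Max_ge[OF finite_imageI[OF finite_strict_chains] imageI])
    then show ?thesis using ys' by simp
  qed simp
qed

lemma rk_bot: "rk (bot::'a::{finite,complete_lattice}) = 0"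
  unfolding rk_def by simp

lemma rk_covers:
  fixes x y :: "'a::{finite,complete_lattice}"
  assumes semi: "semimodular TYPE('a)" and "covers x y"
  shows "rk y = Suc (rk x)"
proof -
  obtain ys where ys: "saturated_chain bot ys x"
    using saturated_chain_exists[OF bot_least] by blast
  have "saturated_chain bot (ys @ [y]) y"
    using saturated_chain_append[OF ys saturated_chain.step[OF assms(2) saturated_chain.base]] .
  then show ?thesis
    using rk_eq_length_saturated_chain[OF semi] rk_eq_length_saturated_chain[OF semi ys] by simp
qed

lemma covers_sup_atom:
  fixes x a :: "'a::{finite,complete_lattice}"
  assumes semi: "semimodular TYPE('a)" and a: "is_atom a"
  shows "\<not> a \<le> x \<Longrightarrow> covers x (sup x a)"
proof (induction x rule: wfp_induct_rule[OF wfp_less_finite])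
  case (1 x)
  show ?case
  proof (cases "x = bot")
    case True
    then show ?thesis using a by (simp add: is_atom_def)
  next
    case False
    then have "bot < x" by (simp add: bot_less)
    then obtain x' where x': "covers x' x"
      using covers_below_exists by blast
    then have "x' < x" by (rule covers_imp_less)
    then have "\<not> a \<le> x'" using 1(2) by (meson less_imp_le order_trans)
    then have up: "covers x' (sup x' a)" using 1(1) \<open>x' < x\<close> by blast
    (* x and x' \<squnion> a are distinct upper covers of x', so semimodularity lifts x' \<lessdot> x' \<squnion> a to x *)
    have "x \<noteq> sup x' a" using 1(2) by (metis sup.cobounded2)
    then have "inf x (sup x' a) = x'" using inf_covers_eq[OF x' up] by blast
    then have "covers x (sup x (sup x' a))"
      using semimodular_covers_sup(1)[OF semi, of x "sup x' a"] x' up by simp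
    moreover have "sup x (sup x' a) = sup x a"
      using \<open>x' < x\<close> by (metis less_imp_le sup.absorb1 sup_assoc)
    ultimately show ?thesis by simp
  qed
qed

lemma rk_sup_atom_le:
  fixes x a :: "'a::{finite,complete_lattice}"
  assumes semi: "semimodular TYPE('a)" and "is_atom a"
  shows "rk (sup x a) \<le> Suc (rk x)"
proof (cases "a \<le> x")
  case False
  then show ?thesis using rk_covers[OF semi covers_sup_atom[OF semi \<open>is_atom a\<close>]] by simp
qed (simp add: sup.absorb1)

lemma rk_sup_Sup_atoms_le:
  fixes x :: "'a::{finite,complete_lattice}"
  assumes semi: "semimodular TYPE('a)"
  shows "\<forall>a\<in>T. is_atom a \<Longrightarrow> rk (sup x (Sup T)) \<le> rk x + card T"
proof (induction T rule: finite_induct[OF finite])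
  case (2 a T)
  have "rk (sup (sup x (Sup T)) a) \<le> Suc (rk (sup x (Sup T)))"
    using rk_sup_atom_le[OF semi] 2(4) by simp
  moreover have "sup x (Sup (insert a T)) = sup (sup x (Sup T)) a"
    by (simp add: ac_simps)
  ultimately show ?case using 2 by simp
qed simp

section \<open>Independent sets of atoms\<close>

definition independent_atoms :: "'a::{finite,complete_lattice} set \<Rightarrow> bool" where
  "independent_atoms B \<longleftrightarrow> (\<forall>a\<in>B. is_atom a) \<and> rk (Sup B) = card B"

lemma NBC_independent_imp_independent_atoms:
  "NBC_independent ord B \<Longrightarrow> independent_atoms B"
  by (auto simp: NBC_independent_def independent_atoms_def)

lemma independent_atoms_subset:
  fixes B :: "'a::{finite,complete_lattice} set"
  assumes semi: "semimodular TYPE('a)" and B: "independent_atoms B" and "T \<subseteq> B"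
  shows "independent_atoms T"
proof -
  have atoms: "\<forall>a\<in>B. is_atom a" and rk_B: "rk (Sup B) = card B"
    using B by (auto simp: independent_atoms_def)
  have T_atoms: "\<forall>a\<in>T. is_atom a" using atoms \<open>T \<subseteq> B\<close> by blast
  have "rk (Sup T) \<le> card T"
    using rk_sup_Sup_atoms_le[OF semi T_atoms, of bot] by (simp add: rk_bot)
  moreover have "B = T \<union> (B - T)" using \<open>T \<subseteq> B\<close> by blast
  then have "Sup B = sup (Sup T) (Sup (B - T))" by (metis Sup_union_distrib)
  then have "rk (Sup B) \<le> rk (Sup T) + card (B - T)"
    using rk_sup_Sup_atoms_le[OF semi, of "B - T" "Sup T"] atoms by simp
  moreover have "card (B - T) + card T = card B"
    using \<open>T \<subseteq> B\<close> by (simp add: card_Diff_subset card_mono)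
  ultimately show ?thesis
    using rk_B atoms \<open>T \<subseteq> B\<close> by (auto simp: independent_atoms_def)
qed

lemma independent_atoms_not_le_Sup:
  fixes a :: "'a::{finite,complete_lattice}"
  assumes semi: "semimodular TYPE('a)" and "independent_atoms (insert a T)" "a \<notin> T"
  shows "\<not> a \<le> Sup T"
proof
  assume "a \<le> Sup T"
  then have "Sup (insert a T) = Sup T" by (simp add: sup.absorb2)
  moreover have "independent_atoms T"
    using independent_atoms_subset[OF semi assms(2)] by blast
  ultimately show False
    using assms(2,3) by (simp add: independent_atoms_def)
qed

lemma inj_on_Sup_independent_atoms:
  fixes B :: "'a::{finite,complete_lattice} set"
  assumes semi: "semimodular TYPE('a)" and B: "independent_atoms B"
  shows "inj_on Sup (Pow B)"
proof -
  have sub: "T \<subseteq> U" if "T \<subseteq> B" "U \<subseteq> B" "Sup T = Sup U" for T U :: "'a set"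
  proof
    fix a assume "a \<in> T"
    then have "a \<le> Sup U" using \<open>Sup T = Sup U\<close> by (metis Sup_upper)
    moreover have "independent_atoms (insert a U)"
      using independent_atoms_subset[OF semi B] that \<open>a \<in> T\<close> by blast
    ultimately show "a \<in> U"
      using independent_atoms_not_le_Sup[OF semi] by blast
  qed
  show ?thesis by (rule inj_onI) (metis sub PowD subset_antisym)
qed

section \<open>Column permutations of a ribbon\<close>

lemma col_perms_permutes: "\<pi> \<in> col_perms ss n \<Longrightarrow> \<pi> permutes {..<n}"
  by (simp add: col_perms_def)

lemma permutes_image_lessThan_subset:
  fixes n :: nat
  assumes "\<pi> permutes {..<n}" "s \<le> n"
  shows "\<pi> ` {..<s} \<subseteq> {..<n}"
proof -
  have "\<pi> ` {..<s} \<subseteq> \<pi> ` {..<n}" using \<open>s \<le> n\<close> by (intro image_mono) auto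
  then show ?thesis using permutes_image[OF assms(1)] by simp
qed

lemma col_perms_image_lessThan:
  assumes \<pi>: "\<pi> \<in> col_perms ss n" and "s \<le> n" "s \<notin> set ss"
  shows "\<pi> ` {..<s} = {..<s}"
proof (rule endo_inj_surj)
  (* a column containing positions on both sides of the boundary s would contain s *)
  show "\<pi> ` {..<s} \<subseteq> {..<s}"
  proof clarify
    fix i assume "i < s"
    then have "same_column ss i (\<pi> i)" using \<pi> \<open>s \<le> n\<close> by (simp add: col_perms_def)
    then show "\<pi> i < s"
      using \<open>i < s\<close> \<open>s \<notin> set ss\<close> unfolding same_column_def
      by (meson not_le min.strict_coboundedI1 max.coboundedI2)
  qed
  show "inj_on \<pi> {..<s}"
    using permutes_inj[OF col_perms_permutes[OF \<pi>]] by (simp add: inj_on_def)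
qed simp

lemma set_take_perm_word:
  "s \<le> length w \<Longrightarrow> set (take s (perm_word \<pi> w)) = (!) w ` \<pi> ` {..<s}"
  by (auto simp: perm_word_def take_map atLeast0LessThan)

lemma permutes_eq_if_images_lessThan_eq:
  fixes \<pi> \<sigma> :: "nat \<Rightarrow> nat"
  assumes \<pi>: "\<pi> permutes {..<n}" and \<sigma>: "\<sigma> permutes {..<n}"
    and images: "\<forall>s\<le>n. \<pi> ` {..<s} = \<sigma> ` {..<s}"
  shows "\<pi> = \<sigma>"
proof
  fix i
  show "\<pi> i = \<sigma> i"
  proof (cases "i < n")
    case True
    (* \<pi> i is the one new value of \<pi> on {..<i+1} compared with {..<i} *)
    have "\<pi> ` {..<Suc i} = insert (\<pi> i) (\<pi> ` {..<i})" "\<sigma> ` {..<Suc i} = insert (\<sigma> i) (\<sigma> ` {..<i})"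
      by (simp_all add: lessThan_Suc)
    moreover have "\<pi> i \<notin> \<pi> ` {..<i}" "\<sigma> i \<notin> \<sigma> ` {..<i}"
      using permutes_inj[OF \<pi>] permutes_inj[OF \<sigma>] by (auto simp: inj_eq)
    ultimately show ?thesis
      using images True by (metis Suc_leI insert_iff less_imp_le)
  next
    case False
    then show ?thesis using permutes_not_in[OF \<pi>] permutes_not_in[OF \<sigma>] by simp
  qed
qed

section \<open>The chains f_chain({\<sigma>F})\<close>

lemma maximal_chain_PS_f_chain:
  fixes u :: "'a::{finite,complete_lattice} list"
  assumes "sorted_wrt (<) ss" and rk: "\<forall>s\<in>set ss. rk (Sup (set (take s u))) = s"
  shows "maximal_chain_PS ss (f_chain ss u)"
proof -
  have "Sup (set (take s u)) < Sup (set (take t u))" if "s \<in> set ss" "t \<in> set ss" "s < t" for s t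
  proof -
    have "Sup (set (take s u)) \<le> Sup (set (take t u))"
      using \<open>s < t\<close> by (intro Sup_subset_mono set_take_subset_set_take) simp
    moreover have "rk (Sup (set (take s u))) \<noteq> rk (Sup (set (take t u)))"
      using rk that by simp
    then have "Sup (set (take s u)) \<noteq> Sup (set (take t u))" by metis
    ultimately show ?thesis by simp
  qed
  then have "sorted_wrt (<) (f_chain ss u)"
    unfolding f_chain_def sorted_wrt_map using assms(1) by (rule sorted_wrt_mono_rel)
  then show ?thesis
    using rk by (simp add: maximal_chain_PS_def f_chain_def)
qed

lemma rk_Sup_take_perm_word:
  fixes w :: "'a::{finite,complete_lattice} list"
  assumes semi: "semimodular TYPE('a)" and "independent_atoms (set w)" "distinct w"
    and \<pi>: "\<pi> permutes {..<length w}" and "s \<le> length w"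
  shows "rk (Sup (set (take s (perm_word \<pi> w)))) = s"
proof -
  have sub: "\<pi> ` {..<s} \<subseteq> {..<length w}"
    using permutes_image_lessThan_subset[OF \<pi> \<open>s \<le> length w\<close>] .
  then have "card ((!) w ` \<pi> ` {..<s}) = card (\<pi> ` {..<s})"
    using inj_on_nth[OF \<open>distinct w\<close>] by (intro card_image) auto
  also have "\<dots> = s"
    using permutes_inj_on[OF \<pi>] by (simp add: card_image)
  finally have "card (set (take s (perm_word \<pi> w))) = s"
    using \<open>s \<le> length w\<close> by (simp add: set_take_perm_word)
  moreover have "set (take s (perm_word \<pi> w)) \<subseteq> set w"
    using sub \<open>s \<le> length w\<close> by (auto simp: set_take_perm_word)
  ultimately show ?thesis
    using independent_atoms_subset[OF semi assms(2)] by (simp add: independent_atoms_def)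
qed

lemma inj_on_f_chain_col_perms:
  assumes Sup_inj: "inj_on Sup (Pow (set w))" and "distinct w" and n: "length w = n"
  shows "inj_on (\<lambda>\<pi>. f_chain ss (perm_word \<pi> w)) (col_perms ss n)"
proof
  fix \<pi> \<sigma> assume \<pi>: "\<pi> \<in> col_perms ss n" and \<sigma>: "\<sigma> \<in> col_perms ss n"
    and eq: "f_chain ss (perm_word \<pi> w) = f_chain ss (perm_word \<sigma> w)"
  have w_inj: "inj_on ((!) w) {..<n}" using \<open>distinct w\<close> n by (simp add: inj_on_nth)
  have "\<pi> ` {..<s} = \<sigma> ` {..<s}" if "s \<le> n" for s
  proof (cases "s \<in> set ss")
    case True
    have sub: "\<pi> ` {..<s} \<subseteq> {..<n}" "\<sigma> ` {..<s} \<subseteq> {..<n}"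
      using permutes_image_lessThan_subset[OF col_perms_permutes \<open>s \<le> n\<close>] \<pi> \<sigma> by auto
    have "Sup (set (take s (perm_word \<pi> w))) = Sup (set (take s (perm_word \<sigma> w)))"
      using eq True by (simp add: f_chain_def)
    then have "Sup ((!) w ` \<pi> ` {..<s}) = Sup ((!) w ` \<sigma> ` {..<s})"
      using \<open>s \<le> n\<close> n by (simp add: set_take_perm_word)
    moreover have "(!) w ` \<pi> ` {..<s} \<in> Pow (set w)" "(!) w ` \<sigma> ` {..<s} \<in> Pow (set w)"
      using sub n by (fastforce intro: nth_mem)+
    ultimately have "(!) w ` \<pi> ` {..<s} = (!) w ` \<sigma> ` {..<s}"
      by (rule inj_onD[OF Sup_inj])
    then show ?thesis using inj_on_image_eq_iff[OF w_inj sub] by simp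
  next
    case False
    then show ?thesis
      using col_perms_image_lessThan[OF \<pi> \<open>s \<le> n\<close>] col_perms_image_lessThan[OF \<sigma> \<open>s \<le> n\<close>]
      by simp
  qed
  then show "\<pi> = \<sigma>"
    using permutes_eq_if_images_lessThan_eq[OF col_perms_permutes[OF \<pi>] col_perms_permutes[OF \<sigma>]]
    by blast
qed

theorem proposition5p35:
  fixes ord :: "'a::{finite,complete_lattice} \<Rightarrow> nat"
    and ss :: "nat list" and n :: nat and w :: "'a list"
  assumes "geometric_lattice TYPE('a)"
    and "atom_ordering ord"
    and "n = rk (top::'a)"
    and "sorted_wrt (<) ss" and "set ss \<subseteq> {1..n-1}"
    and "standard_ribbon_filling ord ss n w"
    and "NBC_plus_basis ord w"
  shows "(\<forall>\<pi>\<in>col_perms ss n. maximal_chain_PS ss (f_chain ss (perm_word \<pi> w)))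
       \<and> inj_on (\<lambda>\<pi>. f_chain ss (perm_word \<pi> w)) (col_perms ss n)"
proof
  have semi: "semimodular TYPE('a)"
    using assms(1) by (rule geometric_lattice_semimodular)
  have "distinct w" and n: "length w = n" and indep: "independent_atoms (set w)"
    using assms(3,7) NBC_independent_imp_independent_atoms by (auto simp: NBC_plus_basis_def)
  show "\<forall>\<pi>\<in>col_perms ss n. maximal_chain_PS ss (f_chain ss (perm_word \<pi> w))"
  proof
    fix \<pi> assume "\<pi> \<in> col_perms ss n"
    then have "\<pi> permutes {..<length w}" using n by (simp add: col_perms_permutes)
    moreover have "\<forall>s\<in>set ss. s \<le> length w" using assms(5) n by fastforce
    ultimately show "maximal_chain_PS ss (f_chain ss (perm_word \<pi> w))"
      using maximal_chain_PS_f_chain[OF assms(4)] rk_Sup_take_perm_word[OF semi indep \<open>distinct w\<close>]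
      by blast
  qed
  show "inj_on (\<lambda>\<pi>. f_chain ss (perm_word \<pi> w)) (col_perms ss n)"
    using inj_on_Sup_independent_atoms[OF semi indep] \<open>distinct w\<close> n
    by (rule inj_on_f_chain_col_perms)
qed

end
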